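(* For every integer $n\ge 3$, the set $\{2,n\}$ is not a $\delta$-set.
   Context: All graphs are finite and simple; $d(u,v)$ denotes the usual graph distance (infinite between different components). For a set $J$ of nonnegative integers, a distance $J$-labeling of $G$ is a function $f:V(G)\to J$ with $f(V(G))=J$ such that whenever two distinct vertices $u,v$ satisfy $f(u)=f(v)=k$, we have $d(u,v)=k$. It is proper if every $k\in J\setminus\{0\}$ is the label of at least two vertices. A finite set $\Sigma$ of nonnegative integers is a $\delta$-set if there exists a graph admitting a proper distance $\Sigma$-labeling. *)

theory Defs
  imports Main "HOL-Library.Extended_Nat"
begin

definition simple_graph :: "'a set \<Rightarrow> ('a \<Rightarrow> 'a \<Rightarrow> bool) \<Rightarrow> bool" where
  "simple_graph V E \<longleftrightarrow> finite V \<and> (\<forall>u v. E u v \<longrightarrow> u \<in> V \<and> v \<in> V) \<and>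
     (\<forall>u v. E u v \<longrightarrow> E v u) \<and> (\<forall>u. \<not> E u u)"

definition walk_of_length :: "'a set \<Rightarrow> ('a \<Rightarrow> 'a \<Rightarrow> bool) \<Rightarrow> 'a \<Rightarrow> 'a \<Rightarrow> nat \<Rightarrow> bool" where
  "walk_of_length V E u v n \<longleftrightarrow> (\<exists>p :: nat \<Rightarrow> 'a. p 0 = u \<and> p n = v \<and>
     (\<forall>i\<le>n. p i \<in> V) \<and> (\<forall>i<n. E (p i) (p (Suc i))))"

text \<open>Graph distance; infinite (\<infinity>) when there is no walk.\<close>
definition gdist :: "'a set \<Rightarrow> ('a \<Rightarrow> 'a \<Rightarrow> bool) \<Rightarrow> 'a \<Rightarrow> 'a \<Rightarrow> enat" where
  "gdist V E u v = (INF n \<in> {n. walk_of_length V E u v n}. enat n)"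

definition distance_labeling ::
  "'a set \<Rightarrow> ('a \<Rightarrow> 'a \<Rightarrow> bool) \<Rightarrow> nat set \<Rightarrow> ('a \<Rightarrow> nat) \<Rightarrow> bool" where
  "distance_labeling V E J f \<longleftrightarrow> f ` V = J \<and>
     (\<forall>u\<in>V. \<forall>v\<in>V. u \<noteq> v \<longrightarrow> f u = f v \<longrightarrow> gdist V E u v = enat (f u))"

definition proper_distance_labeling ::
  "'a set \<Rightarrow> ('a \<Rightarrow> 'a \<Rightarrow> bool) \<Rightarrow> nat set \<Rightarrow> ('a \<Rightarrow> nat) \<Rightarrow> bool" where
  "proper_distance_labeling V E J f \<longleftrightarrow> distance_labeling V E J f \<and>
     (\<forall>k \<in> J - {0}. \<exists>u\<in>V. \<exists>v\<in>V. u \<noteq> v \<and> f u = k \<and> f v = k)"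

text \<open>Vertices are taken from nat (every finite graph is isomorphic
  to one on natural-number vertices).\<close>
definition delta_set :: "nat set \<Rightarrow> bool" where
  "delta_set S \<longleftrightarrow> finite S \<and>
     (\<exists>(V :: nat set) E f. simple_graph V E \<and> proper_distance_labeling V E S f)"

end

theory Submission
  imports Defs
begin

text \<open>Let \<open>u, v\<close> be the two vertices labelled \<open>n\<close>, so \<open>d(u,v) = n\<close>, and let
  \<open>u = p\<^sub>0, p\<^sub>1, \<dots>, p\<^sub>n = v\<close> be a shortest path. The vertices \<open>p\<^sub>1, p\<^sub>2\<close> differ from \<open>u\<close>
  and lie at distance less than \<open>n\<close> from it, so neither carries label \<open>n\<close>; hence both carry
  label \<open>2\<close>, although they are adjacent.\<close>

definition is_walk :: "'a set \<Rightarrow> ('a \<Rightarrow> 'a \<Rightarrow> bool) \<Rightarrow> (nat \<Rightarrow> 'a) \<Rightarrow> nat \<Rightarrow> bool" where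
  "is_walk V E p n \<longleftrightarrow> (\<forall>i\<le>n. p i \<in> V) \<and> (\<forall>i<n. E (p i) (p (Suc i)))"

lemma walk_of_length_iff_is_walk:
  "walk_of_length V E u v n \<longleftrightarrow> (\<exists>p. p 0 = u \<and> p n = v \<and> is_walk V E p n)"
  unfolding walk_of_length_def is_walk_def by blast

lemma walk_of_length_segment:
  assumes "is_walk V E p n" "a \<le> b" "b \<le> n"
  shows "walk_of_length V E (p a) (p b) (b - a)"
  unfolding walk_of_length_iff_is_walk
  by (rule exI[of _ "\<lambda>i. p (i + a)"]) (use assms in \<open>auto simp: is_walk_def\<close>)

lemma gdist_le_walk_length: "walk_of_length V E u v m \<Longrightarrow> gdist V E u v \<le> enat m"
  unfolding gdist_def by (rule INF_lower) simp

lemma gdist_segment_le: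
  assumes "is_walk V E p n" "a \<le> b" "b \<le> n"
  shows "gdist V E (p a) (p b) \<le> enat (b - a)"
  using gdist_le_walk_length walk_of_length_segment[OF assms] .

lemma walk_of_length_gdist:
  assumes "gdist V E u v = enat m"
  shows "walk_of_length V E u v m"
proof -
  let ?S = "{n. walk_of_length V E u v n}"
  have "?S \<noteq> {}"
  proof
    assume "?S = {}"
    then have "gdist V E u v = \<infinity>" unfolding gdist_def by (simp add: Inf_enat_def)
    with assms show False by simp
  qed
  then have least: "(LEAST n. n \<in> ?S) \<in> ?S"
    by (metis LeastI ex_in_conv)
  have "gdist V E u v = enat (LEAST n. n \<in> ?S)"
  proof (rule antisym)
    show "gdist V E u v \<le> enat (LEAST n. n \<in> ?S)"
      using least gdist_le_walk_length by simp
    show "enat (LEAST n. n \<in> ?S) \<le> gdist V E u v"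
      unfolding gdist_def by (rule INF_greatest) (simp add: Least_le)
  qed
  with assms least show ?thesis by simp
qed

lemma shortest_walk_avoids_start:
  assumes "is_walk V E p n" "gdist V E (p 0) (p n) = enat n" "0 < i" "i \<le> n"
  shows "p i \<noteq> p 0"
proof
  assume "p i = p 0"
  then have "gdist V E (p 0) (p n) \<le> enat (n - i)"
    using gdist_segment_le[OF assms(1) assms(4)] by simp
  with assms(2-4) show False by simp
qed

lemma distance_labeling_label_neq:
  assumes "distance_labeling V E J f" "x \<in> V" "y \<in> V" "x \<noteq> y"
    and "gdist V E x y < enat (f x)"
  shows "f y \<noteq> f x"
  using assms unfolding distance_labeling_def by force

lemma distance_labeling_adjacent_same_label:
  assumes "simple_graph V E" "distance_labeling V E J f" "E x y" "f x = f y"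
  shows "f x \<le> 1"
proof -
  have "x \<in> V" "y \<in> V" "x \<noteq> y"
    using assms(1,3) unfolding simple_graph_def by metis+
  moreover have "walk_of_length V E x y 1"
    unfolding walk_of_length_iff_is_walk is_walk_def
    by (rule exI[of _ "\<lambda>i. if i = 0 then x else y"])
      (use calculation assms(3) in \<open>auto simp: le_Suc_eq\<close>)
  then have "gdist V E x y \<le> enat 1"
    by (rule gdist_le_walk_length)
  ultimately show ?thesis
    using distance_labeling_label_neq[OF assms(2)] assms(4)
    by (metis enat_ord_simps(2) le_less_trans not_le)
qed

lemma distance_labeling_shortest_walk_interior:
  assumes "distance_labeling V E J f" "is_walk V E p n"
    and "gdist V E (p 0) (p n) = enat n" "f (p 0) = n" "0 < i" "i < n"
  shows "f (p i) \<noteq> n"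
proof -
  have "gdist V E (p 0) (p i) \<le> enat i"
    using gdist_segment_le[OF assms(2), of 0 i] assms(6) by simp
  also have "enat i < enat (f (p 0))"
    using assms(4,6) by simp
  finally have "gdist V E (p 0) (p i) < enat (f (p 0))" .
  moreover have "p i \<noteq> p 0"
    using shortest_walk_avoids_start[OF assms(2,3,5)] assms(6) by simp
  moreover have "p 0 \<in> V" "p i \<in> V"
    using assms(2,6) unfolding is_walk_def by auto
  ultimately show ?thesis
    using distance_labeling_label_neq[OF assms(1)] assms(4) by metis
qed

theorem mainTheorem11:
  fixes n :: nat
  assumes "n \<ge> 3"
  shows "\<not> delta_set {2, n}"
proof
  assume "delta_set {2, n}"
  then obtain V :: "nat set" and E f where G: "simple_graph V E"
    and L: "distance_labeling V E {2, n} f"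
    and "\<exists>u\<in>V. \<exists>v\<in>V. u \<noteq> v \<and> f u = n \<and> f v = n"
    using assms unfolding delta_set_def proper_distance_labeling_def by force
  then obtain u v where uv: "u \<in> V" "v \<in> V" "u \<noteq> v" "f u = n" "f v = n"
    by blast
  then have "gdist V E u v = enat n"
    using L unfolding distance_labeling_def by simp
  then obtain p where p: "p 0 = u" "p n = v" "is_walk V E p n"
    using walk_of_length_gdist walk_of_length_iff_is_walk by metis
  have label_2: "f (p i) = 2" if "i \<in> {1, 2}" for i
  proof -
    have "f (p i) \<noteq> n"
      using distance_labeling_shortest_walk_interior[OF L p(3)] \<open>gdist V E u v = enat n\<close>
        p(1,2) uv(4) that assms by auto
    moreover have "p i \<in> V" using p(3) that assms unfolding is_walk_def by auto
    ultimately show ?thesis using L unfolding distance_labeling_def by auto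
  qed
  have "E (p 1) (p 2)"
    using p(3) assms unfolding is_walk_def by (auto simp: numeral_2_eq_2)
  moreover have "f (p 1) = f (p 2)"
    using label_2 by simp
  ultimately have "f (p 1) \<le> 1"
    by (rule distance_labeling_adjacent_same_label[OF G L])
  then show False
    using label_2[of 1] by simp
qed

end
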